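(* Let $(X,T)$ be a linearly recurrent minimal Cantor system with a sequence of CKR partitions satisfying (KR1)–(KR6) and (LR), and $\mu$ its unique invariant probability measure. There exist $c\ge0$ and $\beta\in[0,1)$ such that for all $n,k\in\mathbb N$ with $k\le n$, $$\sup_{1\le t\le C(n-k),\,1\le\bar t\le C(n)}\big|\mu[\tau_n=\bar t\mid\tau_{n-k}=t]-\mu[\tau_n=\bar t]\big|\le c\beta^k.$$
   Context: Minimal Cantor system, CKR partitions $\mathcal P(n)=\{T^{-j}B_k(n):1\le k\le C(n),0\le j<h_k(n)\}$ with $\mathcal P(0)$ trivial, roof $B(n)=\bigcup_kB_k(n)$, towers $\mathcal T_k(n)=\bigcup_{0\le j<h_k(n)}T^{-j}B_k(n)$, conditions (KR1) $B(n+1)\subseteq B(n)$; (KR2) $\mathcal P(n+1)$ refines $\mathcal P(n)$; (KR3) $\bigcap_nB(n)$ is one point; (KR4) the partitions generate the topology; (KR5) for all $n\ge1$, $k\le C(n-1)$, $l\le C(n)$ some $0\le j<h_l(n)$ has $T^{-j}B_l(n)\subseteq B_k(n-1)$; (KR6) $B(n)\subseteq B_1(n-1)$; (LR) $h_l(n)\le Lh_k(n-1)$ for a constant $L$. $\tau_n(x)=k$ iff $x\in\mathcal T_k(n)$; $(\tau_n)$ is a non-stationary Markov chain under $\mu$. *)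

theory Defs
  imports "HOL-Probability.Probability"
begin

text \<open>The Cantor system is (UNIV :: 'a set, T) for a metric space type 'a.
  The notation T^{-j} A of the paper is the preimage of A under the j-th iterate of T.\<close>

definition preT :: "('a \<Rightarrow> 'a) \<Rightarrow> nat \<Rightarrow> 'a set \<Rightarrow> 'a set" where
  "preT T j A = (T ^^ j) -` A"

definition cantor_space :: "'a::metric_space itself \<Rightarrow> bool" where
  "cantor_space _ \<longleftrightarrow> compact (UNIV :: 'a set)
     \<and> (\<forall>x::'a. \<not> open {x})
     \<and> (\<forall>x::'a. connected_component_set UNIV x = {x})"

definition minimal_system :: "('a::topological_space \<Rightarrow> 'a) \<Rightarrow> bool" where
  "minimal_system T \<longleftrightarrow>
     (\<forall>F. closed F \<and> T ` F = F \<longrightarrow> F = {} \<or> F = UNIV)"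

definition invariant_prob :: "('a::topological_space \<Rightarrow> 'a) \<Rightarrow> 'a measure \<Rightarrow> bool" where
  "invariant_prob T \<mu> \<longleftrightarrow> prob_space \<mu> \<and> sets \<mu> = sets borel
     \<and> (\<forall>A \<in> sets borel. emeasure \<mu> (T -` A) = emeasure \<mu> A)"

definition KR_index :: "(nat \<Rightarrow> nat) \<Rightarrow> (nat \<Rightarrow> nat \<Rightarrow> nat) \<Rightarrow> nat \<Rightarrow> (nat \<times> nat) set" where
  "KR_index C h n = {(k, j). 1 \<le> k \<and> k \<le> C n \<and> j < h n k}"

definition KR_atom :: "('a \<Rightarrow> 'a) \<Rightarrow> (nat \<Rightarrow> nat \<Rightarrow> 'a set) \<Rightarrow> nat \<Rightarrow> nat \<times> nat \<Rightarrow> 'a set" where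
  "KR_atom T B n kj = preT T (snd kj) (B n (fst kj))"

definition roof :: "(nat \<Rightarrow> nat) \<Rightarrow> (nat \<Rightarrow> nat \<Rightarrow> 'a set) \<Rightarrow> nat \<Rightarrow> 'a set" where
  "roof C B n = (\<Union>k\<in>{1..C n}. B n k)"

definition tower :: "('a \<Rightarrow> 'a) \<Rightarrow> (nat \<Rightarrow> nat \<Rightarrow> nat) \<Rightarrow> (nat \<Rightarrow> nat \<Rightarrow> 'a set) \<Rightarrow> nat \<Rightarrow> nat \<Rightarrow> 'a set" where
  "tower T h B n k = (\<Union>j<h n k. preT T j (B n k))"

definition KR_partition :: "('a::topological_space \<Rightarrow> 'a) \<Rightarrow> (nat \<Rightarrow> nat) \<Rightarrow> (nat \<Rightarrow> nat \<Rightarrow> nat)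
    \<Rightarrow> (nat \<Rightarrow> nat \<Rightarrow> 'a set) \<Rightarrow> nat \<Rightarrow> bool" where
  "KR_partition T C h B n \<longleftrightarrow>
     (\<forall>k\<in>{1..C n}. open (B n k) \<and> closed (B n k) \<and> B n k \<noteq> {} \<and> 1 \<le> h n k)
     \<and> (\<forall>a\<in>KR_index C h n. \<forall>b\<in>KR_index C h n. a \<noteq> b \<longrightarrow>
           KR_atom T B n a \<inter> KR_atom T B n b = {})
     \<and> (\<Union>a\<in>KR_index C h n. KR_atom T B n a) = UNIV"

definition CKR_sequence :: "('a::topological_space \<Rightarrow> 'a) \<Rightarrow> (nat \<Rightarrow> nat) \<Rightarrow> (nat \<Rightarrow> nat \<Rightarrow> nat)
    \<Rightarrow> (nat \<Rightarrow> nat \<Rightarrow> 'a set) \<Rightarrow> bool" where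
  "CKR_sequence T C h B \<longleftrightarrow>
     (\<forall>n. KR_partition T C h B n)
     \<comment> \<open>P(0) is trivial\<close>
     \<and> C 0 = 1 \<and> h 0 1 = 1 \<and> B 0 1 = UNIV
     \<comment> \<open>(KR1)\<close>
     \<and> (\<forall>n. roof C B (Suc n) \<subseteq> roof C B n)
     \<comment> \<open>(KR2)\<close>
     \<and> (\<forall>n. \<forall>a\<in>KR_index C h (Suc n). \<exists>b\<in>KR_index C h n.
            KR_atom T B (Suc n) a \<subseteq> KR_atom T B n b)
     \<comment> \<open>(KR3)\<close>
     \<and> (\<exists>x. (\<Inter>n. roof C B n) = {x})
     \<comment> \<open>(KR4): the atoms of all P(n) form a base of the topology\<close>
     \<and> (\<forall>U x. open U \<and> x \<in> U \<longrightarrow>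
            (\<exists>n. \<exists>a\<in>KR_index C h n. x \<in> KR_atom T B n a \<and> KR_atom T B n a \<subseteq> U))
     \<comment> \<open>(KR5)\<close>
     \<and> (\<forall>n\<ge>1. \<forall>k\<in>{1..C (n - 1)}. \<forall>l\<in>{1..C n}. \<exists>j<h n l.
            preT T j (B n l) \<subseteq> B (n - 1) k)
     \<comment> \<open>(KR6)\<close>
     \<and> (\<forall>n\<ge>1. roof C B n \<subseteq> B (n - 1) 1)"

definition LR_condition :: "(nat \<Rightarrow> nat) \<Rightarrow> (nat \<Rightarrow> nat \<Rightarrow> nat) \<Rightarrow> bool" where
  "LR_condition C h \<longleftrightarrow> (\<exists>L::nat. \<forall>n\<ge>1. \<forall>l\<in>{1..C n}. \<forall>k\<in>{1..C (n - 1)}.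
       h n l \<le> L * h (n - 1) k)"

text \<open>Conditional probability \<mu>[\<tau>_n = tb | \<tau>_m = t].\<close>
definition cond_tower_prob :: "'a measure \<Rightarrow> ('a \<Rightarrow> 'a) \<Rightarrow> (nat \<Rightarrow> nat \<Rightarrow> nat)
    \<Rightarrow> (nat \<Rightarrow> nat \<Rightarrow> 'a set) \<Rightarrow> nat \<Rightarrow> nat \<Rightarrow> nat \<Rightarrow> nat \<Rightarrow> real" where
  "cond_tower_prob \<mu> T h B n tb m t =
     measure \<mu> (tower T h B n tb \<inter> tower T h B m t) / measure \<mu> (tower T h B m t)"

end

theory Submission
  imports Defs
begin

text \<open>
  The label process \<open>\<tau>\<^sub>n\<close> behaves like a non-stationary Markov chain whose one-step
  transition matrices are uniformly positive by linear recurrence, so Doeblin's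
  contraction argument gives exponential decay of correlations.

  Following the backward orbit of a base point of
    tower \<open>s\<close> of \<open>P(n)\<close> for \<open>h\<^sub>s(n)\<close> steps visits every level of that tower once; the
    incidence number \<open>N n m s t\<close> counts the levels lying in tower \<open>t\<close> of \<open>P(m)\<close>, \<open>m \<le> n\<close>.
    A backward orbit segment between two visits of the roof \<open>B(p)\<close> is a concatenation of
    full towers of \<open>P(p)\<close>, which makes the row-normalised matrices \<open>F = N / h\<close> satisfy the
    Chapman--Kolmogorov equations; (KR5) forces \<open>N (m+1) m r t \<ge> h\<^sub>t(m)\<close>.
  \<^item> Measures (locale \<open>kr_measured\<close>).  All levels of a tower carry the same invariant
    mass, which expresses the conditional probabilities through the matrices \<open>F\<close>.
  \<^item> Contraction (locale \<open>lr_towers\<close>).  By (LR) all entries of \<open>F (m+1) m\<close> are at least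
    \<open>1/L\<close>, so rows of \<open>F n (n-k)\<close> approach each other geometrically with ratio \<open>1 - 1/L\<close>.
  \<^item> An elementary estimate for weighted averages then yields the main theorem with
    \<open>\<beta> = 1 - 1/L\<close>.
\<close>

section \<open>Elementary estimates on finite sums\<close>

lemma sum_increment_weight:
  fixes w :: "'i \<Rightarrow> nat"
  assumes "finite A" "r \<in> A"
  shows "(\<Sum>x\<in>A. (w(r := w r + 1)) x * f x) = f r + (\<Sum>x\<in>A. w x * f x)"
proof -
  have "(\<Sum>x\<in>A. (w(r := w r + 1)) x * f x) = (\<Sum>x\<in>A. w x * f x + (if x = r then f r else 0))"
    by (rule sum.cong) auto
  also have "\<dots> = (\<Sum>x\<in>A. w x * f x) + f r"
    using assms by (simp add: sum.distrib)
  finally show ?thesis by simp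
qed

lemma sum_if_const:
  "(\<Sum>i<(H::nat). if P i then (c::real) else 0) = c * real (\<Sum>i<H. if P i then 1 else 0)"
  by (induction H) (auto simp: algebra_simps)

lemma doeblin_contraction:
  fixes \<gamma> :: "'u \<Rightarrow> real" and P :: "'u \<Rightarrow> 'v \<Rightarrow> real"
  assumes "finite U" "finite V" "(\<Sum>u\<in>U. \<gamma> u) = 0"
    and "\<And>u v. u \<in> U \<Longrightarrow> v \<in> V \<Longrightarrow> \<delta> \<le> P u v"
    and "\<And>u. u \<in> U \<Longrightarrow> (\<Sum>v\<in>V. P u v) = 1"
    and "0 \<le> \<delta>" "1 \<le> card V"
  shows "(\<Sum>v\<in>V. \<bar>\<Sum>u\<in>U. \<gamma> u * P u v\<bar>) \<le> (1 - \<delta>) * (\<Sum>u\<in>U. \<bar>\<gamma> u\<bar>)"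
proof -
  have shift: "(\<Sum>u\<in>U. \<gamma> u * P u v) = (\<Sum>u\<in>U. \<gamma> u * (P u v - \<delta>))" for v
  proof -
    have "(\<Sum>u\<in>U. \<gamma> u * (P u v - \<delta>)) = (\<Sum>u\<in>U. \<gamma> u * P u v) - (\<Sum>u\<in>U. \<gamma> u) * \<delta>"
      by (simp add: algebra_simps sum_subtractf sum_distrib_right sum_distrib_left)
    then show ?thesis using assms(3) by simp
  qed
  have "(\<Sum>v\<in>V. \<bar>\<Sum>u\<in>U. \<gamma> u * P u v\<bar>) \<le> (\<Sum>v\<in>V. \<Sum>u\<in>U. \<bar>\<gamma> u\<bar> * (P u v - \<delta>))"
  proof (intro sum_mono)
    fix v assume v: "v \<in> V"
    have "\<bar>\<Sum>u\<in>U. \<gamma> u * (P u v - \<delta>)\<bar> \<le> (\<Sum>u\<in>U. \<bar>\<gamma> u * (P u v - \<delta>)\<bar>)" by (rule sum_abs)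
    also have "\<dots> = (\<Sum>u\<in>U. \<bar>\<gamma> u\<bar> * (P u v - \<delta>))"
      using assms(4) v by (intro sum.cong refl) (simp add: abs_mult)
    finally show "\<bar>\<Sum>u\<in>U. \<gamma> u * P u v\<bar> \<le> (\<Sum>u\<in>U. \<bar>\<gamma> u\<bar> * (P u v - \<delta>))"
      by (simp only: shift)
  qed
  also have "\<dots> = (\<Sum>u\<in>U. \<bar>\<gamma> u\<bar> * (\<Sum>v\<in>V. P u v - \<delta>))"
    by (subst sum.swap) (simp add: sum_distrib_left)
  also have "\<dots> = (\<Sum>u\<in>U. \<bar>\<gamma> u\<bar> * (1 - card V * \<delta>))"
    using assms(5) by (intro sum.cong refl) (simp add: sum_subtractf)
  also have "\<dots> \<le> (\<Sum>u\<in>U. \<bar>\<gamma> u\<bar> * (1 - \<delta>))"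
  proof -
    have "1 - real (card V) * \<delta> \<le> 1 - \<delta>"
      using assms(6,7) by (simp add: mult_le_cancel_right1)
    then show ?thesis by (intro sum_mono mult_left_mono) auto
  qed
  also have "\<dots> = (1 - \<delta>) * (\<Sum>u\<in>U. \<bar>\<gamma> u\<bar>)"
    by (simp add: sum_distrib_right[symmetric] mult.commute)
  finally show ?thesis .
qed

lemma reweighting_trivial_bound:
  fixes \<pi> F :: "'i \<Rightarrow> real"
  assumes "finite I" "i \<in> I" "\<And>s. s \<in> I \<Longrightarrow> 0 \<le> \<pi> s" "(\<Sum>s\<in>I. \<pi> s) = 1"
    and "\<And>s. s \<in> I \<Longrightarrow> 0 \<le> F s"
  shows "\<bar>\<pi> i * F i / (\<Sum>s\<in>I. \<pi> s * F s) - \<pi> i\<bar> \<le> 1"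
proof -
  let ?D = "\<Sum>s\<in>I. \<pi> s * F s"
  have num_le: "\<pi> i * F i \<le> ?D" and num_nonneg: "0 \<le> \<pi> i * F i"
    using assms by (auto intro!: member_le_sum)
  then have "0 \<le> \<pi> i * F i / ?D \<and> \<pi> i * F i / ?D \<le> 1"
    by (cases "?D = 0") (auto simp: divide_le_eq_1)
  moreover have "\<pi> i \<le> 1"
    using member_le_sum[of i I \<pi>] assms by auto
  ultimately show ?thesis using assms(3)[OF assms(2)] by linarith
qed

lemma reweighting_relative_bound:
  fixes \<pi> F :: "'i \<Rightarrow> real"
  assumes "finite I" "i \<in> I" "\<And>s. s \<in> I \<Longrightarrow> 0 \<le> \<pi> s" "(\<Sum>s\<in>I. \<pi> s) = 1"
    and "\<And>s. s \<in> I \<Longrightarrow> 0 < F s" "\<And>s. s \<in> I \<Longrightarrow> \<bar>F i - F s\<bar> \<le> \<epsilon> * F s"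
  shows "\<bar>\<pi> i * F i / (\<Sum>s\<in>I. \<pi> s * F s) - \<pi> i\<bar> \<le> \<epsilon>"
proof -
  let ?D = "\<Sum>s\<in>I. \<pi> s * F s"
  have pi_i: "0 \<le> \<pi> i" "\<pi> i \<le> 1"
    using assms member_le_sum[of i I \<pi>] by auto
  have eps: "0 \<le> \<epsilon>"
    using assms(5,6)[OF assms(2)] by (auto simp: zero_le_mult_iff)
  have "\<exists>s0\<in>I. 0 < \<pi> s0"
  proof (rule ccontr)
    assume "\<not> (\<exists>s0\<in>I. 0 < \<pi> s0)"
    then have "\<forall>s\<in>I. \<pi> s = 0" using assms(3) by (meson order.antisym not_less)
    then show False using assms(4) by simp
  qed
  then obtain s0 where s0: "s0 \<in> I" "0 < \<pi> s0" by blast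
  have "0 < \<pi> s0 * F s0" using s0 assms(5) by simp
  also have "\<dots> \<le> ?D"
    using assms s0 by (intro member_le_sum) (auto intro!: mult_nonneg_nonneg less_imp_le[OF assms(5)])
  finally have D_pos: "0 < ?D" .
  have "F i - ?D = (\<Sum>s\<in>I. \<pi> s * (F i - F s))"
    using assms(4) by (simp add: algebra_simps sum_subtractf sum_distrib_left[symmetric])
  then have "\<bar>F i - ?D\<bar> \<le> (\<Sum>s\<in>I. \<bar>\<pi> s * (F i - F s)\<bar>)" by simp
  also have "\<dots> \<le> (\<Sum>s\<in>I. \<pi> s * (\<epsilon> * F s))"
    using assms(3,6) by (intro sum_mono) (simp add: abs_mult mult_left_mono)
  also have "\<dots> = \<epsilon> * ?D" by (simp add: sum_distrib_left algebra_simps)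
  finally have dev: "\<bar>F i - ?D\<bar> \<le> \<epsilon> * ?D" .
  have "\<pi> i * F i / ?D - \<pi> i = \<pi> i * (F i - ?D) / ?D"
    using D_pos by (simp add: field_simps)
  then have "\<bar>\<pi> i * F i / ?D - \<pi> i\<bar> = \<pi> i * \<bar>F i - ?D\<bar> / ?D"
    using pi_i D_pos by (simp add: abs_mult)
  also have "\<dots> \<le> \<pi> i * (\<epsilon> * ?D) / ?D"
    using dev pi_i D_pos by (intro divide_right_mono mult_left_mono) auto
  also have "\<dots> \<le> \<epsilon>" using pi_i eps D_pos by (simp add: mult_left_le_one_le)
  finally show ?thesis .
qed

section \<open>Combinatorics of the Kakutani--Rokhlin towers\<close>

locale kr_towers =
  fixes T :: "'a::topological_space \<Rightarrow> 'a"
    and C :: "nat \<Rightarrow> nat" and h :: "nat \<Rightarrow> nat \<Rightarrow> nat" and B :: "nat \<Rightarrow> nat \<Rightarrow> 'a set"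
  assumes bij_T: "bij T" and ckr: "CKR_sequence T C h B"
begin

abbreviation idx :: "nat \<Rightarrow> (nat \<times> nat) set" where "idx n \<equiv> KR_index C h n"
abbreviation atom :: "nat \<Rightarrow> nat \<times> nat \<Rightarrow> 'a set" where "atom n a \<equiv> KR_atom T B n a"
abbreviation labels :: "nat \<Rightarrow> nat set" where "labels n \<equiv> {1..C n}"

text \<open>Towers are climbed by \<open>T\<close>, so walking down a tower from its base means iterating
  the inverse \<open>S = T\<^sup>-\<^sup>1\<close>.\<close>
definition S :: "'a \<Rightarrow> 'a" where "S = inv T"

lemma T_S [simp]: "T (S x) = x"
  unfolding S_def using bij_T by (simp add: bij_is_surj surj_f_inv_f)

lemma T_iterate_S_iterate: "(T ^^ j) ((S ^^ j) x) = x"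
  using fn_o_inv_fn_is_id[OF bij_T, of j] unfolding S_def by (simp add: fun_eq_iff)

lemma T_iterate_S_iterate_le:
  assumes "j \<le> i" shows "(T ^^ j) ((S ^^ i) x) = (S ^^ (i - j)) x"
proof -
  obtain d where "i = j + d" using assms le_Suc_ex by blast
  then show ?thesis by (simp add: funpow_add T_iterate_S_iterate)
qed

lemma KR_partition: "KR_partition T C h B n"
  using ckr unfolding CKR_sequence_def by (elim conjE) (erule spec)

lemma idx_eq: "idx n = Sigma (labels n) (\<lambda>k. {..<h n k})"
  unfolding KR_index_def by auto

lemma finite_idx: "finite (idx n)"
  unfolding idx_eq by auto

lemma base_props: "k \<in> labels n \<Longrightarrow> open (B n k) \<and> closed (B n k) \<and> B n k \<noteq> {} \<and> 1 \<le> h n k"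
  using KR_partition[of n] unfolding KR_partition_def by (elim conjE) (erule bspec)

lemma height_pos: "k \<in> labels n \<Longrightarrow> 1 \<le> h n k"
  using base_props by blast

lemma atom_disjoint: "a \<in> idx n \<Longrightarrow> b \<in> idx n \<Longrightarrow> a \<noteq> b \<Longrightarrow> atom n a \<inter> atom n b = {}"
  using KR_partition[of n] unfolding KR_partition_def by (elim conjE) blast

lemma atom_cover: "\<exists>a\<in>idx n. y \<in> atom n a"
proof -
  have "(\<Union>a\<in>idx n. atom n a) = UNIV"
    using KR_partition[of n] unfolding KR_partition_def by (elim conjE)
  then show ?thesis by blast
qed

lemma atom_iff: "y \<in> atom n (k, j) \<longleftrightarrow> (T ^^ j) y \<in> B n k"
  unfolding KR_atom_def preT_def by simp

text \<open>The address of a point at level \<open>n\<close> is the index \<open>(k, j)\<close> of the atom of \<open>P(n)\<close>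
  containing it; its label \<open>k\<close> is the value of \<open>\<tau>\<^sub>n\<close>.\<close>
definition address :: "nat \<Rightarrow> 'a \<Rightarrow> nat \<times> nat" where
  "address n y = (THE a. a \<in> idx n \<and> y \<in> atom n a)"

definition label :: "nat \<Rightarrow> 'a \<Rightarrow> nat" where
  "label n y = fst (address n y)"

lemma address_eq: assumes "a \<in> idx n" "y \<in> atom n a" shows "address n y = a"
  unfolding address_def
proof (rule the_equality)
  show "a \<in> idx n \<and> y \<in> atom n a" using assms by blast
  show "b = a" if "b \<in> idx n \<and> y \<in> atom n b" for b
    using that atom_disjoint[of b n a] assms by blast
qed

lemma address_in: "address n y \<in> idx n \<and> y \<in> atom n (address n y)"
  using atom_cover[of n y] address_eq by metis

lemma label_in: "label n y \<in> labels n"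
  using address_in[of n y] unfolding label_def KR_index_def by auto

lemma labels_nonempty: "1 \<le> C n"
  using label_in[of n undefined] by simp

text \<open>The tower \<open>t\<close> of \<open>P(m)\<close> is the event \<open>\<tau>\<^sub>m = t\<close>.\<close>
lemma tower_iff: assumes "t \<in> labels m" shows "y \<in> tower T h B m t \<longleftrightarrow> label m y = t"
proof
  assume "y \<in> tower T h B m t"
  then obtain j where "j < h m t" "y \<in> atom m (t, j)"
    unfolding tower_def KR_atom_def by auto
  then have "address m y = (t, j)"
    using assms by (intro address_eq) (auto simp: KR_index_def)
  then show "label m y = t" by (simp add: label_def)
next
  assume "label m y = t"
  then obtain j where "address m y = (t, j)"
    unfolding label_def by (cases "address m y") auto
  then show "y \<in> tower T h B m t"
    using address_in[of m y] unfolding tower_def KR_atom_def KR_index_def by auto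
qed

lemma address_descent:
  assumes "x \<in> B p r" "r \<in> labels p" "i < h p r"
  shows "address p ((S ^^ i) x) = (r, i)"
  using assms by (intro address_eq) (auto simp: KR_index_def atom_iff T_iterate_S_iterate_le)

lemma label_descent: "x \<in> B p r \<Longrightarrow> r \<in> labels p \<Longrightarrow> i < h p r \<Longrightarrow> label p ((S ^^ i) x) = r"
  using address_descent by (simp add: label_def)

lemma roof_iff: "y \<in> roof C B n \<longleftrightarrow> snd (address n y) = 0"
proof
  assume "y \<in> roof C B n"
  then obtain k where k: "k \<in> labels n" "y \<in> B n k" unfolding roof_def by blast
  then have "address n y = (k, 0)"
    using height_pos[OF k(1)] by (intro address_eq) (auto simp: KR_index_def atom_iff)
  then show "snd (address n y) = 0" by simp
next
  assume "snd (address n y) = 0"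
  then show "y \<in> roof C B n"
    using address_in[of n y] unfolding roof_def KR_index_def
    by (cases "address n y") (auto simp: atom_iff)
qed

lemma descent_off_roof:
  assumes "x \<in> B p r" "r \<in> labels p" "0 < i" "i < h p r"
  shows "(S ^^ i) x \<notin> roof C B p"
  using address_descent[OF assms(1,2,4)] assms(3) roof_iff by simp

text \<open>\<dots> and is back on the roof after exactly \<open>h\<^sub>r(p)\<close> steps: the point reached lies in
  some atom \<open>(r', j')\<close>, and \<open>j' > 0\<close> would place its image under \<open>T\<close>, the top of tower
  \<open>r\<close>, at the level \<open>j' - 1 < h\<^sub>r(p) - 1\<close> of tower \<open>r'\<close>.\<close>
lemma descent_returns_to_roof:
  assumes "x \<in> B p r" "r \<in> labels p"
  shows "(S ^^ h p r) x \<in> roof C B p"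
proof (rule ccontr)
  let ?y = "(S ^^ h p r) x"
  assume "?y \<notin> roof C B p"
  obtain r' j' where a: "address p ?y = (r', j')" by (cases "address p ?y")
  with roof_iff \<open>?y \<notin> _\<close> obtain j'' where j'': "j' = Suc j''" by (cases j') auto
  have a_in: "(r', j') \<in> idx p" "?y \<in> atom p (r', j')"
    using address_in[of p ?y] a by auto
  obtain h' where h': "h p r = Suc h'" using height_pos[OF assms(2)] by (cases "h p r") auto
  have "T ?y = (S ^^ h') x" by (simp add: h')
  then have top: "address p (T ?y) = (r, h')"
    using address_descent[OF assms] h' by simp
  have "(T ^^ j'') (T ?y) = (T ^^ j') ?y" by (simp add: j'' funpow_swap1)
  then have "T ?y \<in> atom p (r', j'')" using a_in(2) by (simp add: atom_iff)
  moreover have "(r', j'') \<in> idx p" using a_in(1) j'' by (auto simp: KR_index_def)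
  ultimately have "address p (T ?y) = (r', j'')" by (rule address_eq[rotated])
  with top have "r' = r" "j'' = h'" by auto
  with a_in(1) j'' h' show False by (simp add: KR_index_def)
qed

lemma KR1: "roof C B (Suc n) \<subseteq> roof C B n"
  using ckr unfolding CKR_sequence_def by (elim conjE) (erule spec)

lemma KR2: "a \<in> idx (Suc n) \<Longrightarrow> \<exists>b\<in>idx n. atom (Suc n) a \<subseteq> atom n b"
  using ckr unfolding CKR_sequence_def by (elim conjE) (erule allE, erule bspec)

lemma KR5:
  assumes "r \<in> labels (Suc m)" "t \<in> labels m"
  shows "\<exists>j<h (Suc m) r. preT T j (B (Suc m) r) \<subseteq> B m t"
proof -
  have "\<forall>n\<ge>1. \<forall>k\<in>labels (n - 1). \<forall>l\<in>labels n. \<exists>j<h n l. preT T j (B n l) \<subseteq> B (n - 1) k"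
    using ckr unfolding CKR_sequence_def by (elim conjE) assumption
  then show ?thesis using assms by (metis One_nat_def Suc_le_mono diff_Suc_1 le0)
qed

lemma refinement: "m \<le> n \<Longrightarrow> a \<in> idx n \<Longrightarrow> \<exists>b\<in>idx m. atom n a \<subseteq> atom m b"
proof (induction n arbitrary: a rule: dec_induct)
  case (step n)
  then show ?case using KR2[OF step.prems] by blast
qed blast

lemma roof_antimono: "m \<le> n \<Longrightarrow> roof C B n \<subseteq> roof C B m"
  by (induction n rule: dec_induct) (use KR1 in blast)+

lemma address_coarse_const:
  assumes "m \<le> n" "a \<in> idx n" "y \<in> atom n a" "y' \<in> atom n a"
  shows "address m y = address m y'"
proof -
  obtain b where "b \<in> idx m" "atom n a \<subseteq> atom m b" using refinement[OF assms(1,2)] by blast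
  then show ?thesis using assms(3,4) address_eq by (metis subsetD)
qed

definition base_point :: "nat \<Rightarrow> nat \<Rightarrow> 'a" where
  "base_point n s = (SOME x. x \<in> B n s)"

lemma base_point_in: "s \<in> labels n \<Longrightarrow> base_point n s \<in> B n s"
  unfolding base_point_def using base_props by (simp add: some_in_eq)

definition visits :: "nat \<Rightarrow> 'a \<Rightarrow> nat \<Rightarrow> nat \<Rightarrow> nat" where
  "visits m x H t = (\<Sum>i<H. if label m ((S ^^ i) x) = t then 1 else 0)"

text \<open>The incidence number \<open>N n m s t\<close>: how many levels of tower \<open>s\<close> of \<open>P(n)\<close> lie in tower
  \<open>t\<close> of \<open>P(m)\<close>.\<close>
definition N :: "nat \<Rightarrow> nat \<Rightarrow> nat \<Rightarrow> nat \<Rightarrow> nat" where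
  "N n m s t = visits m (base_point n s) (h n s) t"

lemma S_iterate_add: "(S ^^ (a + b)) x = (S ^^ b) ((S ^^ a) x)"
  unfolding add.commute[of a b] funpow_add by simp

lemma visits_add: "visits m x (a + b) t = visits m x a t + visits m ((S ^^ a) x) b t"
  by (induction b) (simp_all add: visits_def S_iterate_add)

lemma visits_full_tower:
  assumes "x \<in> B p r" "r \<in> labels p" "m \<le> p"
  shows "visits m x (h p r) t = N p m r t"
  unfolding N_def visits_def
proof (rule sum.cong[OF refl])
  fix i assume i: "i \<in> {..<h p r}"
  then have "(r, i) \<in> idx p" using assms(2) by (auto simp: KR_index_def)
  moreover have "(S ^^ i) x \<in> atom p (r, i)"
    using address_in[of p "(S ^^ i) x"] address_descent[OF assms(1,2)] i by simp
  moreover have "(S ^^ i) (base_point p r) \<in> atom p (r, i)"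
    using address_in[of p "(S ^^ i) (base_point p r)"] i
      address_descent[OF base_point_in[OF assms(2)] assms(2)] by simp
  ultimately have "address m ((S ^^ i) x) = address m ((S ^^ i) (base_point p r))"
    by (rule address_coarse_const[OF assms(3)])
  then have "label m ((S ^^ i) x) = label m ((S ^^ i) (base_point p r))"
    by (simp add: label_def)
  then show "(if label m ((S ^^ i) x) = t then 1 else 0)
      = (if label m ((S ^^ i) (base_point p r)) = t then 1 else 0)" by simp
qed

text \<open>A backward orbit segment from the roof \<open>B(p)\<close> back to the roof is a concatenation of
  full towers of \<open>P(p)\<close>; hence its label counts at every level \<open>m \<le> p\<close> are one fixed
  nonnegative integer combination \<open>w\<close> of the rows of \<open>N p m\<close>.\<close>
lemma visits_roof_segment:
  assumes "x \<in> roof C B p" "(S ^^ H) x \<in> roof C B p"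
  shows "\<exists>w. \<forall>m\<le>p. \<forall>t. visits m x H t = (\<Sum>r\<in>labels p. w r * N p m r t)"
  using assms
proof (induction H arbitrary: x rule: less_induct)
  case (less H)
  show ?case
  proof (cases "H = 0")
    case True
    then show ?thesis by (intro exI[of _ "\<lambda>_. 0"]) (simp add: visits_def)
  next
    case False
    from less.prems(1) obtain r where r: "r \<in> labels p" "x \<in> B p r" unfolding roof_def by blast
    have "h p r \<le> H"
    proof (rule ccontr)
      assume "\<not> h p r \<le> H"
      then show False using descent_off_roof[OF r(2,1), of H] False less.prems(2) by simp
    qed
    define x' where "x' = (S ^^ h p r) x"
    have "(S ^^ (H - h p r)) x' = (S ^^ H) x"
      using S_iterate_add[of "h p r" "H - h p r" x] \<open>h p r \<le> H\<close> unfolding x'_def by simp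
    then have "(S ^^ (H - h p r)) x' \<in> roof C B p" using less.prems(2) by simp
    moreover have "x' \<in> roof C B p" using descent_returns_to_roof[OF r(2,1)] x'_def by simp
    moreover have "H - h p r < H" using height_pos[OF r(1)] False by simp
    ultimately obtain w where w: "\<forall>m\<le>p. \<forall>t. visits m x' (H - h p r) t = (\<Sum>r\<in>labels p. w r * N p m r t)"
      using less.IH by blast
    show ?thesis
    proof (intro exI[of _ "w(r := w r + 1)"] allI impI)
      fix m t assume "m \<le> p"
      have "visits m x H t = visits m x (h p r + (H - h p r)) t" using \<open>h p r \<le> H\<close> by simp
      also have "\<dots> = N p m r t + visits m x' (H - h p r) t"
        unfolding visits_add x'_def using visits_full_tower[OF r(2,1) \<open>m \<le> p\<close>] by simp
      also have "\<dots> = N p m r t + (\<Sum>r'\<in>labels p. w r' * N p m r' t)"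
        using w \<open>m \<le> p\<close> by simp
      also have "\<dots> = (\<Sum>r'\<in>labels p. (w(r := w r + 1)) r' * N p m r' t)"
        using r(1) by (intro sum_increment_weight[of "labels p" r w "\<lambda>r'. N p m r' t", symmetric]) auto
      finally show "visits m x H t = (\<Sum>r'\<in>labels p. (w(r := w r + 1)) r' * N p m r' t)" .
    qed
  qed
qed

lemma N_diag: assumes "r \<in> labels p" shows "N p p r t = (if t = r then h p r else 0)"
proof -
  have "N p p r t = (\<Sum>i<h p r. if r = t then 1 else 0)"
    unfolding N_def visits_def using label_descent[OF base_point_in[OF assms] assms]
    by (intro sum.cong) auto
  then show ?thesis by auto
qed

text \<open>Each level of a tower carries exactly one label, so rows of \<open>N\<close> sum to the height.\<close>
lemma N_row_sum: "(\<Sum>t\<in>labels m. N p m r t) = h p r"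
proof -
  have "(\<Sum>t\<in>labels m. N p m r t)
      = (\<Sum>i<h p r. \<Sum>t\<in>labels m. if label m ((S ^^ i) (base_point p r)) = t then 1 else 0)"
    unfolding N_def visits_def by (rule sum.swap)
  also have "\<dots> = (\<Sum>i<h p r. 1)" using label_in by (intro sum.cong) auto
  finally show ?thesis by simp
qed

text \<open>Factorisation through an intermediate level \<open>p\<close>: a tower of \<open>P(n)\<close> is made of
  \<open>w r\<close> copies of each tower \<open>r\<close> of \<open>P(p)\<close>.\<close>
lemma N_factor:
  assumes "m \<le> p" "p \<le> n" "s \<in> labels n"
  obtains w where "\<And>t. N n m s t = (\<Sum>r\<in>labels p. w r * N p m r t)"
    and "\<And>r. r \<in> labels p \<Longrightarrow> N n p s r = w r * h p r"
proof -
  have "base_point n s \<in> roof C B p" "(S ^^ h n s) (base_point n s) \<in> roof C B p"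
    using base_point_in[OF assms(3)] descent_returns_to_roof[OF base_point_in[OF assms(3)] assms(3)]
      roof_antimono[OF assms(2)] assms(3) unfolding roof_def by blast+
  from visits_roof_segment[OF this] obtain w
    where "\<forall>m'\<le>p. \<forall>t. visits m' (base_point n s) (h n s) t = (\<Sum>r\<in>labels p. w r * N p m' r t)"
    by blast
  then have w: "\<forall>m'\<le>p. \<forall>t. N n m' s t = (\<Sum>r\<in>labels p. w r * N p m' r t)"
    by (simp add: N_def)
  show ?thesis
  proof
    show "N n m s t = (\<Sum>r\<in>labels p. w r * N p m r t)" for t using w assms(1) by simp
  next
    fix r assume r: "r \<in> labels p"
    have "N n p s r = (\<Sum>r'\<in>labels p. w r' * N p p r' r)" using w by simp
    also have "\<dots> = (\<Sum>r'\<in>labels p. if r' = r then w r * h p r else 0)"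
      by (intro sum.cong) (auto simp: N_diag)
    finally show "N n p s r = w r * h p r" using r by simp
  qed
qed

text \<open>By (KR5) tower \<open>r\<close> of \<open>P(m+1)\<close> passes through the base of tower \<open>t\<close> of \<open>P(m)\<close>, so by
  the factorisation it contains at least one full copy of that tower.\<close>
lemma N_lower_bound:
  assumes "r \<in> labels (Suc m)" "t \<in> labels m"
  shows "h m t \<le> N (Suc m) m r t"
proof -
  obtain w where w: "N (Suc m) m r t = w t * h m t"
  proof (rule N_factor[of m m "Suc m" r])
    fix w assume "\<And>t'. t' \<in> labels m \<Longrightarrow> N (Suc m) m r t' = w t' * h m t'"
    then show thesis using that assms(2) by blast
  qed (use assms in auto)
  obtain j where j: "j < h (Suc m) r" "preT T j (B (Suc m) r) \<subseteq> B m t"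
    using KR5[OF assms] by blast
  have "(S ^^ j) (base_point (Suc m) r) \<in> B m t"
    using j(2) base_point_in[OF assms(1)] by (auto simp: preT_def T_iterate_S_iterate)
  then have "(S ^^ j) (base_point (Suc m) r) \<in> tower T h B m t"
    using height_pos[OF assms(2)] unfolding tower_def preT_def by (intro UN_I[of 0]) auto
  then have "label m ((S ^^ j) (base_point (Suc m) r)) = t" using tower_iff[OF assms(2)] by blast
  then have "1 \<le> N (Suc m) m r t"
    unfolding N_def visits_def using j(1) by (intro order.trans[OF _ member_le_sum[of j]]) auto
  then show ?thesis using w by (cases "w t") auto
qed

text \<open>\<open>F n m s t\<close> is the proportion of the levels of tower \<open>s\<close> of \<open>P(n)\<close> lying in tower \<open>t\<close>
  of \<open>P(m)\<close>; it will turn out to be the conditional law of \<open>\<tau>\<^sub>m\<close> given \<open>\<tau>\<^sub>n = s\<close>.\<close>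
definition F :: "nat \<Rightarrow> nat \<Rightarrow> nat \<Rightarrow> nat \<Rightarrow> real" where
  "F n m s t = real (N n m s t) / real (h n s)"

lemma F_nonneg: "0 \<le> F n m s t"
  unfolding F_def by simp

lemma F_row_sum: assumes "s \<in> labels n" shows "(\<Sum>t\<in>labels m. F n m s t) = 1"
proof -
  have "(\<Sum>t\<in>labels m. F n m s t) = real (\<Sum>t\<in>labels m. N n m s t) / real (h n s)"
    unfolding F_def by (simp add: sum_divide_distrib)
  also have "\<dots> = 1" using N_row_sum[of n m s] height_pos[OF assms] by (simp del: of_nat_sum)
  finally show ?thesis .
qed

lemma F_le_1: assumes "s \<in> labels n" "t \<in> labels m" shows "F n m s t \<le> 1"
  using member_le_sum[of t "labels m" "F n m s"] assms F_nonneg F_row_sum[OF assms(1)] by simp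

lemma F_chapman_kolmogorov:
  assumes "m \<le> p" "p \<le> n" "s \<in> labels n"
  shows "F n m s t = (\<Sum>r\<in>labels p. F n p s r * F p m r t)"
proof -
  obtain w where w1: "\<And>t. N n m s t = (\<Sum>r\<in>labels p. w r * N p m r t)"
    and w2: "\<And>r. r \<in> labels p \<Longrightarrow> N n p s r = w r * h p r"
    using N_factor[OF assms] by blast
  have "(\<Sum>r\<in>labels p. F n p s r * F p m r t) = (\<Sum>r\<in>labels p. real (w r * N p m r t) / real (h n s))"
  proof (intro sum.cong refl)
    fix r assume r: "r \<in> labels p"
    have "real (h p r) \<noteq> 0" using height_pos[OF r] by simp
    then show "F n p s r * F p m r t = real (w r * N p m r t) / real (h n s)"
      unfolding F_def using w2[OF r] by (simp add: field_simps)
  qed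
  also have "\<dots> = F n m s t"
    unfolding F_def w1 by (simp add: sum_divide_distrib)
  finally show ?thesis by simp
qed

definition row_dist :: "nat \<Rightarrow> nat \<Rightarrow> nat \<Rightarrow> nat \<Rightarrow> real" where
  "row_dist n p s s' = (\<Sum>r\<in>labels p. \<bar>F n p s r - F n p s' r\<bar>)"

lemma row_dist_le_2: assumes "s \<in> labels n" "s' \<in> labels n" shows "row_dist n p s s' \<le> 2"
proof -
  have "row_dist n p s s' \<le> (\<Sum>r\<in>labels p. F n p s r + F n p s' r)"
    unfolding row_dist_def using F_nonneg by (intro sum_mono) (simp add: abs_le_iff)
  also have "\<dots> = 2" using F_row_sum[OF assms(1)] F_row_sum[OF assms(2)] by (simp add: sum.distrib)
  finally show ?thesis .
qed

lemma F_row_difference: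
  assumes "Suc m \<le> n" "s \<in> labels n" "s' \<in> labels n"
  shows "F n m s t - F n m s' t
    = (\<Sum>r\<in>labels (Suc m). (F n (Suc m) s r - F n (Suc m) s' r) * F (Suc m) m r t)"
  using F_chapman_kolmogorov[of m "Suc m" n s t] F_chapman_kolmogorov[of m "Suc m" n s' t] assms
  by (simp add: sum_subtractf algebra_simps)

end

section \<open>Invariant measure of the towers\<close>

locale kr_measured = kr_towers +
  fixes \<mu> :: "'a measure"
  assumes cont_T: "continuous_on UNIV T" and invariant: "invariant_prob T \<mu>"
begin

lemma sets_\<mu>: "sets \<mu> = sets borel"
  using invariant unfolding invariant_prob_def by blast

lemma prob_space_\<mu>: "prob_space \<mu>"
  using invariant unfolding invariant_prob_def by blast

lemma preT_Suc: "preT T (Suc j) A = T -` preT T j A"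
  unfolding preT_def by (simp add: funpow_Suc_right vimage_comp del: funpow.simps)

lemma preT_borel: assumes "A \<in> sets borel" shows "preT T j A \<in> sets borel"
proof (induction j)
  case 0
  then show ?case using assms by (simp add: preT_def)
next
  case (Suc j)
  have "T \<in> borel_measurable borel" using cont_T by (rule borel_measurable_continuous_onI)
  from measurable_sets[OF this Suc.IH] show ?case by (simp add: preT_Suc)
qed

lemma measure_preT: assumes "A \<in> sets borel" shows "measure \<mu> (preT T j A) = measure \<mu> A"
proof (induction j)
  case 0
  then show ?case by (simp add: preT_def)
next
  case (Suc j)
  have "emeasure \<mu> (T -` preT T j A) = emeasure \<mu> (preT T j A)"
    using invariant preT_borel[OF assms] unfolding invariant_prob_def by blast
  then show ?case using Suc by (simp add: preT_Suc measure_def)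
qed

lemma atom_borel: "a \<in> idx n \<Longrightarrow> atom n a \<in> sets borel"
  unfolding KR_atom_def KR_index_def using base_props by (cases a) (auto intro!: preT_borel)

lemma tower_borel: "t \<in> labels m \<Longrightarrow> tower T h B m t \<in> sets borel"
  unfolding tower_def using base_props by (auto intro!: preT_borel)

lemma measure_atom: "s \<in> labels n \<Longrightarrow> measure \<mu> (atom n (s, i)) = measure \<mu> (B n s)"
  unfolding KR_atom_def using base_props by (simp add: measure_preT)

lemma measure_by_atoms:
  assumes "E \<in> sets borel"
  shows "measure \<mu> E = (\<Sum>s\<in>labels n. \<Sum>i<h n s. measure \<mu> (atom n (s, i) \<inter> E))"
proof -
  interpret prob_space \<mu> by (rule prob_space_\<mu>)
  have "E = (\<Union>a\<in>idx n. atom n a \<inter> E)" using atom_cover[of n] by blast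
  then have "measure \<mu> E = measure \<mu> (\<Union>a\<in>idx n. atom n a \<inter> E)" by simp
  also have "\<dots> = (\<Sum>a\<in>idx n. measure \<mu> (atom n a \<inter> E))"
  proof (rule finite_measure_finite_Union)
    show "(\<lambda>a. atom n a \<inter> E) ` idx n \<subseteq> sets \<mu>" using atom_borel assms sets_\<mu> by auto
    show "disjoint_family_on (\<lambda>a. atom n a \<inter> E) (idx n)"
      unfolding disjoint_family_on_def using atom_disjoint by blast
  qed (rule finite_idx)
  finally show ?thesis unfolding idx_eq by (simp add: sum.Sigma split_def)
qed

lemma level_inter_tower:
  assumes "m \<le> n" "s \<in> labels n" "i < h n s" "t \<in> labels m"
  shows "atom n (s, i) \<inter> tower T h B m t
    = (if label m ((S ^^ i) (base_point n s)) = t then atom n (s, i) else {})"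
proof -
  have a: "(s, i) \<in> idx n" using assms by (auto simp: KR_index_def)
  have x: "(S ^^ i) (base_point n s) \<in> atom n (s, i)"
    using address_in[of n "(S ^^ i) (base_point n s)"]
      address_descent[OF base_point_in[OF assms(2)] assms(2,3)] by simp
  have "label m y = label m ((S ^^ i) (base_point n s))" if "y \<in> atom n (s, i)" for y
    using address_coarse_const[OF assms(1) a that x] by (simp add: label_def)
  then show ?thesis using tower_iff[OF assms(4)] by auto
qed

definition mass :: "nat \<Rightarrow> nat \<Rightarrow> real" where
  "mass n s = measure \<mu> (B n s) * real (h n s)"

lemma mass_nonneg: "0 \<le> mass n s"
  unfolding mass_def by simp

lemma mass_sum: "(\<Sum>s\<in>labels n. mass n s) = 1"
proof -
  interpret prob_space \<mu> by (rule prob_space_\<mu>)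
  have "1 = measure \<mu> UNIV"
    using prob_space sets_eq_imp_space_eq[OF sets_\<mu>] by simp
  also have "\<dots> = (\<Sum>s\<in>labels n. \<Sum>i<h n s. measure \<mu> (atom n (s, i)))"
    using measure_by_atoms[of UNIV n] by simp
  also have "\<dots> = (\<Sum>s\<in>labels n. mass n s)"
    unfolding mass_def by (intro sum.cong refl) (simp add: measure_atom mult.commute)
  finally show ?thesis by simp
qed

lemma measure_tower_slice:
  assumes "m \<le> n" "s \<in> labels n" "t \<in> labels m"
  shows "(\<Sum>i<h n s. measure \<mu> (atom n (s, i) \<inter> tower T h B m t)) = mass n s * F n m s t"
proof -
  have "(\<Sum>i<h n s. measure \<mu> (atom n (s, i) \<inter> tower T h B m t))
      = (\<Sum>i<h n s. if label m ((S ^^ i) (base_point n s)) = t then measure \<mu> (B n s) else 0)"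
    using assms by (intro sum.cong refl) (auto simp: level_inter_tower measure_atom)
  also have "\<dots> = measure \<mu> (B n s) * real (N n m s t)"
    unfolding N_def visits_def by (rule sum_if_const)
  also have "\<dots> = mass n s * F n m s t"
    using height_pos[OF assms(2)] unfolding mass_def F_def by simp
  finally show ?thesis .
qed

lemma measure_tower:
  assumes "m \<le> n" "t \<in> labels m"
  shows "measure \<mu> (tower T h B m t) = (\<Sum>s\<in>labels n. mass n s * F n m s t)"
  using measure_by_atoms[OF tower_borel[OF assms(2)], of n] measure_tower_slice[OF assms(1) _ assms(2)]
  by simp

lemma measure_tower_inter:
  assumes "m \<le> n" "tb \<in> labels n" "t \<in> labels m"
  shows "measure \<mu> (tower T h B n tb \<inter> tower T h B m t) = mass n tb * F n m tb t"
proof -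
  let ?E = "tower T h B n tb \<inter> tower T h B m t"
  have slice: "(\<Sum>i<h n s. measure \<mu> (atom n (s, i) \<inter> ?E))
      = (if s = tb then mass n tb * F n m tb t else 0)" if s: "s \<in> labels n" for s
  proof -
    have "atom n (s, i) \<inter> ?E = (if s = tb then atom n (s, i) \<inter> tower T h B m t else {})"
      if "i < h n s" for i
    proof -
      have "atom n (s, i) \<inter> tower T h B n tb = (if s = tb then atom n (s, i) else {})"
        using level_inter_tower[OF order.refl s that assms(2)]
          label_descent[OF base_point_in[OF s] s that] by simp
      then show ?thesis unfolding Int_assoc[symmetric] by (cases "s = tb") simp_all
    qed
    then show ?thesis using measure_tower_slice[OF assms(1) s assms(3)] by (cases "s = tb") simp_all
  qed
  have "?E \<in> sets borel" using tower_borel assms(2,3) by blast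
  then have "measure \<mu> ?E = (\<Sum>s\<in>labels n. \<Sum>i<h n s. measure \<mu> (atom n (s, i) \<inter> ?E))"
    by (rule measure_by_atoms)
  also have "\<dots> = mass n tb * F n m tb t"
    using assms(2) by (simp add: slice)
  finally show ?thesis .
qed

lemma measure_tower_eq_mass: assumes "tb \<in> labels n" shows "measure \<mu> (tower T h B n tb) = mass n tb"
  using measure_tower_inter[OF order.refl assms assms] N_diag[OF assms, of tb] height_pos[OF assms]
  by (simp add: F_def)

lemma cond_tower_prob_eq:
  assumes "m \<le> n" "tb \<in> labels n" "t \<in> labels m"
  shows "cond_tower_prob \<mu> T h B n tb m t
    = mass n tb * F n m tb t / (\<Sum>s\<in>labels n. mass n s * F n m s t)"
  unfolding cond_tower_prob_def using measure_tower_inter[OF assms] measure_tower[OF assms(1,3)]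
  by simp

end

section \<open>Linear recurrence and loss of memory\<close>

text \<open>(LR) bounds the ratio of heights at consecutive levels; adding \<open>2\<close> to the constant
  makes it a real number strictly greater than \<open>1\<close>.\<close>
lemma LR_height_ratio:
  assumes "LR_condition C h"
  obtains L :: real where "1 < L"
    and "\<And>n r t. r \<in> {1..C (Suc n)} \<Longrightarrow> t \<in> {1..C n} \<Longrightarrow> real (h (Suc n) r) \<le> L * real (h n t)"
proof -
  obtain L0 :: nat where L0: "\<forall>n\<ge>1. \<forall>l\<in>{1..C n}. \<forall>k\<in>{1..C (n - 1)}. h n l \<le> L0 * h (n - 1) k"
    using assms unfolding LR_condition_def by blast
  show ?thesis
  proof
    fix n r t assume "r \<in> {1..C (Suc n)}" "t \<in> {1..C n}"
    then have "real (h (Suc n) r) \<le> real L0 * real (h n t)"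
      using L0[rule_format, of "Suc n" r t] by (simp flip: of_nat_mult)
    also have "\<dots> \<le> (real L0 + 2) * real (h n t)" by (intro mult_right_mono) auto
    finally show "real (h (Suc n) r) \<le> (real L0 + 2) * real (h n t)" .
  qed simp
qed

locale lr_towers = kr_towers +
  fixes L :: real
  assumes L_ge_1: "1 \<le> L"
    and height_ratio: "\<And>n r t. r \<in> labels (Suc n) \<Longrightarrow> t \<in> labels n \<Longrightarrow> real (h (Suc n) r) \<le> L * real (h n t)"
begin

text \<open>Each one-step matrix has all entries at least \<open>1/L\<close>: the tower \<open>r\<close> of \<open>P(m+1)\<close> contains
  a full copy of the tower \<open>t\<close> of \<open>P(m)\<close>, which is at least \<open>1/L\<close> times as high.\<close>
lemma F_step_lower_bound:
  assumes "r \<in> labels (Suc m)" "t \<in> labels m"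
  shows "1 / L \<le> F (Suc m) m r t"
proof -
  have ht: "0 < real (h m t)" and hr: "0 < real (h (Suc m) r)"
    using height_pos[OF assms(2)] height_pos[OF assms(1)] by simp_all
  have "1 / L \<le> real (h m t) / real (h (Suc m) r)"
    using height_ratio[OF assms] ht hr L_ge_1 by (simp add: field_simps)
  also have "\<dots> \<le> F (Suc m) m r t"
    unfolding F_def using N_lower_bound[OF assms] hr by (simp add: divide_right_mono)
  finally show ?thesis .
qed

lemma row_dist_contraction:
  assumes "j \<le> n" "s \<in> labels n" "s' \<in> labels n"
  shows "row_dist n (n - j) s s' \<le> 2 * (1 - 1/L) ^ j"
  using assms(1)
proof (induction j)
  case 0
  then show ?case using row_dist_le_2[OF assms(2,3)] by simp
next
  case (Suc j)
  define m where "m = n - Suc j"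
  have m: "n - j = Suc m" "Suc m \<le> n" using Suc.prems unfolding m_def by auto
  have "row_dist n m s s'
      = (\<Sum>t\<in>labels m. \<bar>\<Sum>r\<in>labels (Suc m). (F n (Suc m) s r - F n (Suc m) s' r) * F (Suc m) m r t\<bar>)"
    unfolding row_dist_def using F_row_difference[OF m(2) assms(2,3)] by simp
  also have "\<dots> \<le> (1 - 1/L) * (\<Sum>r\<in>labels (Suc m). \<bar>F n (Suc m) s r - F n (Suc m) s' r\<bar>)"
  proof (rule doeblin_contraction)
    show "(\<Sum>r\<in>labels (Suc m). F n (Suc m) s r - F n (Suc m) s' r) = 0"
      using F_row_sum[OF assms(2)] F_row_sum[OF assms(3)] by (simp add: sum_subtractf)
    show "1 / L \<le> F (Suc m) m u v" if "u \<in> labels (Suc m)" "v \<in> labels m" for u v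
      using F_step_lower_bound that by blast
    show "(\<Sum>v\<in>labels m. F (Suc m) m u v) = 1" if "u \<in> labels (Suc m)" for u
      using F_row_sum that by blast
    show "1 \<le> card (labels m)" using labels_nonempty[of m] by simp
  qed (use L_ge_1 in auto)
  also have "\<dots> \<le> (1 - 1/L) * (2 * (1 - 1/L) ^ j)"
    using Suc L_ge_1 m(1) unfolding row_dist_def by (intro mult_left_mono) auto
  finally show ?case unfolding m_def by simp
qed

lemma F_lower_bound:
  assumes "1 \<le> k" "k \<le> n" "s \<in> labels n" "t \<in> labels (n - k)"
  shows "1 / L \<le> F n (n - k) s t"
proof -
  define m where "m = n - k"
  have "Suc m \<le> n" using assms unfolding m_def by simp
  have "1 / L = (\<Sum>r\<in>labels (Suc m). F n (Suc m) s r * (1 / L))"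
    using F_row_sum[OF assms(3), of "Suc m"] by (simp add: sum_divide_distrib[symmetric])
  also have "\<dots> \<le> (\<Sum>r\<in>labels (Suc m). F n (Suc m) s r * F (Suc m) m r t)"
    using F_step_lower_bound assms(4) F_nonneg unfolding m_def by (intro sum_mono mult_left_mono) auto
  also have "\<dots> = F n m s t"
    using F_chapman_kolmogorov[of m "Suc m" n s t] \<open>Suc m \<le> n\<close> assms(3) by simp
  finally show ?thesis unfolding m_def .
qed

lemma F_relative_error:
  assumes "1 \<le> k" "k \<le> n" "s \<in> labels n" "s' \<in> labels n" "t \<in> labels (n - k)"
  shows "\<bar>F n (n - k) s t - F n (n - k) s' t\<bar> \<le> (2 * L * (1 - 1/L) ^ (k - 1)) * F n (n - k) s' t"
proof -
  define m where "m = n - k"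
  have m: "Suc m \<le> n" "n - (k - 1) = Suc m" using assms unfolding m_def by auto
  have "\<bar>F n m s t - F n m s' t\<bar>
      \<le> (\<Sum>r\<in>labels (Suc m). \<bar>(F n (Suc m) s r - F n (Suc m) s' r) * F (Suc m) m r t\<bar>)"
    unfolding F_row_difference[OF m(1) assms(3,4)] by (rule sum_abs)
  also have "\<dots> \<le> (\<Sum>r\<in>labels (Suc m). \<bar>F n (Suc m) s r - F n (Suc m) s' r\<bar>)"
  proof (intro sum_mono)
    fix r assume "r \<in> labels (Suc m)"
    then have "F (Suc m) m r t \<le> 1" using F_le_1 assms(5) unfolding m_def by blast
    then show "\<bar>(F n (Suc m) s r - F n (Suc m) s' r) * F (Suc m) m r t\<bar>
        \<le> \<bar>F n (Suc m) s r - F n (Suc m) s' r\<bar>"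
      using F_nonneg by (simp add: abs_mult mult_left_le)
  qed
  also have "\<dots> \<le> 2 * (1 - 1/L) ^ (k - 1)"
    using row_dist_contraction[of "k - 1" n s s'] assms m(2) unfolding row_dist_def by simp
  also have "\<dots> = (2 * L * (1 - 1/L) ^ (k - 1)) * (1 / L)" using L_ge_1 by simp
  also have "\<dots> \<le> (2 * L * (1 - 1/L) ^ (k - 1)) * F n m s' t"
    using F_lower_bound[OF assms(1,2,4,5)] L_ge_1 unfolding m_def by (intro mult_left_mono) auto
  finally show ?thesis unfolding m_def .
qed

end

section \<open>Exponential loss of memory of the label process\<close>

locale lr_measured = lr_towers + kr_measured
begin

text \<open>For \<open>k \<ge> 1\<close> the conditional law of \<open>\<tau>\<^sub>n\<close> given \<open>\<tau>\<^sub>n\<^sub>-\<^sub>k = t\<close> is the tower masses of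
  \<open>P(n)\<close> reweighted by a column of \<open>F n (n-k)\<close>, whose entries agree up to a geometrically
  small relative error; for \<open>k = 0\<close> the trivial bound suffices.\<close>
lemma exponential_mixing:
  assumes "1 < L" "k \<le> n" "t \<in> labels (n - k)" "tb \<in> labels n"
  shows "\<bar>cond_tower_prob \<mu> T h B n tb (n - k) t - measure \<mu> (tower T h B n tb)\<bar>
    \<le> (2 * L / (1 - 1/L)) * (1 - 1/L) ^ k"
proof -
  define \<beta> where "\<beta> = 1 - 1/L"
  have \<beta>: "0 < \<beta>" "\<beta> \<le> 1" using assms(1) unfolding \<beta>_def by (simp_all add: field_simps)
  have "\<bar>mass n tb * F n (n - k) tb t / (\<Sum>s\<in>labels n. mass n s * F n (n - k) s t) - mass n tb\<bar>
      \<le> (2 * L / \<beta>) * \<beta> ^ k"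
  proof (cases "k = 0")
    case True
    have "1 \<le> 2 * L / \<beta>" using \<beta> assms(1) by (subst le_divide_eq_1_pos) linarith+
    moreover have "\<bar>mass n tb * F n (n - k) tb t / (\<Sum>s\<in>labels n. mass n s * F n (n - k) s t)
        - mass n tb\<bar> \<le> 1"
      by (rule reweighting_trivial_bound) (use assms(4) mass_nonneg mass_sum F_nonneg in auto)
    ultimately show ?thesis by (simp only: True power_0 mult_1_right)
  next
    case False
    then have k: "1 \<le> k" by simp
    have "\<bar>mass n tb * F n (n - k) tb t / (\<Sum>s\<in>labels n. mass n s * F n (n - k) s t) - mass n tb\<bar>
        \<le> 2 * L * \<beta> ^ (k - 1)"
    proof (rule reweighting_relative_bound)
      show "0 < F n (n - k) s t" if "s \<in> labels n" for s
      proof (rule order_less_le_trans)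
        show "0 < 1 / L" using assms(1) by simp
      qed (rule F_lower_bound[OF k assms(2) that assms(3)])
      show "\<bar>F n (n - k) tb t - F n (n - k) s t\<bar> \<le> 2 * L * \<beta> ^ (k - 1) * F n (n - k) s t"
        if "s \<in> labels n" for s
        using F_relative_error[OF k assms(2,4) that assms(3)] unfolding \<beta>_def .
    qed (use assms(4) mass_nonneg mass_sum in auto)
    also have "\<dots> = (2 * L / \<beta>) * \<beta> ^ k"
    proof -
      have "\<beta> ^ k = \<beta> * \<beta> ^ (k - 1)" using k by (simp flip: power_Suc)
      then show ?thesis using \<beta>(1) by simp
    qed
    finally show ?thesis .
  qed
  then show ?thesis
    using assms(2-4) unfolding \<beta>_def by (simp add: cond_tower_prob_eq measure_tower_eq_mass)
qed

end

text \<open>The main theorem: only bijectivity and continuity of \<open>T\<close>, the CKR conditions, (LR) and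
  invariance of \<open>\<mu>\<close> are used, with \<open>\<beta> = 1 - 1/L\<close> and \<open>c = 2L/\<beta>\<close>.\<close>
theorem mainTheorem4:
  fixes T :: "'a::metric_space \<Rightarrow> 'a"
    and C :: "nat \<Rightarrow> nat" and h :: "nat \<Rightarrow> nat \<Rightarrow> nat" and B :: "nat \<Rightarrow> nat \<Rightarrow> 'a set"
    and \<mu> :: "'a measure"
  assumes "cantor_space TYPE('a)"
    and "continuous_on UNIV T" and "bij T"
    and "minimal_system T"
    and "CKR_sequence T C h B"
    and "LR_condition C h"
    and "invariant_prob T \<mu>"
    and "\<forall>\<nu>. invariant_prob T \<nu> \<longrightarrow> \<nu> = \<mu>"
  shows "\<exists>c::real. \<exists>\<beta>::real. c \<ge> 0 \<and> 0 \<le> \<beta> \<and> \<beta> < 1 \<and>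
    (\<forall>n k. k \<le> n \<longrightarrow>
      (\<forall>t\<in>{1..C (n - k)}. \<forall>tb\<in>{1..C n}.
         \<bar>cond_tower_prob \<mu> T h B n tb (n - k) t - measure \<mu> (tower T h B n tb)\<bar> \<le> c * \<beta> ^ k))"
proof -
  obtain L :: real where L: "1 < L"
    and ratio: "\<And>n r t. r \<in> {1..C (Suc n)} \<Longrightarrow> t \<in> {1..C n} \<Longrightarrow> real (h (Suc n) r) \<le> L * real (h n t)"
    using LR_height_ratio[OF assms(6)] by blast
  interpret lr_measured T C h B L \<mu>
  proof unfold_locales
    show "1 \<le> L" using L by simp
  qed (use assms(2,3,5,7) ratio in auto)
  have "\<bar>cond_tower_prob \<mu> T h B n tb (n - k) t - measure \<mu> (tower T h B n tb)\<bar>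
      \<le> (2 * L / (1 - 1/L)) * (1 - 1/L) ^ k"
    if "k \<le> n" "t \<in> {1..C (n - k)}" "tb \<in> {1..C n}" for n k t tb
    using exponential_mixing[OF L that] .
  moreover have "0 \<le> 2 * L / (1 - 1/L)" "0 \<le> 1 - 1/L" "1 - 1/L < 1"
    using L by (simp_all add: field_simps)
  ultimately show ?thesis by blast
qed

end
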